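(* For every integer $n\ge0$, $$\overline p(n)=(-1)^n\sum_{\substack{c\in\mathcal C_{P_4}\\ |c|=n}}(-2)^{\ell(c)},$$ where $P_4=\{m^2: m\in\mathbb N\}$ is the set of positive squares.
   Context: An overpartition of $n$ is a partition of $n$ in which the first occurrence of each distinct part may or may not be overlined; $\overline p(n)$ is the number of overpartitions of $n$ ($\overline p(0)=1$), so that $\sum_{n\ge0}\overline p(n)q^n=\prod_{j\ge1}\frac{1+q^j}{1-q^j}$. A composition is an ordered finite sequence of positive integers (including the empty one); $|c|$ is the sum and $\ell(c)$ the number of parts; $\mathcal C_T$ is the set of compositions with all parts in $T$. *)

theory Defs
  imports Main "HOL-Library.Multiset"
begin

text \<open>An overpartition of n: a partition of n (a multiset of positive parts summing to n)
  together with the set of distinct parts whose first occurrence is overlined.\<close>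
definition overpartitions :: "nat \<Rightarrow> (nat multiset \<times> nat set) set" where
  "overpartitions n = {(M, S). (\<forall>x\<in>#M. 0 < x) \<and> sum_mset M = n \<and> S \<subseteq> set_mset M}"

definition overpartition_count :: "nat \<Rightarrow> nat" where
  "overpartition_count n = card (overpartitions n)"

definition compositions_in :: "nat set \<Rightarrow> nat \<Rightarrow> nat list set" where
  "compositions_in T n = {c. (\<forall>x\<in>set c. 0 < x \<and> x \<in> T) \<and> sum_list c = n}"

definition P4 :: "nat set" where
  "P4 = {m ^ 2 | m. 1 \<le> m}"

end

theory Submission
  imports Defs "HOL-Computational_Algebra.Formal_Power_Series"
begin

text \<open>
  Both sides satisfy \<open>f 0 = 1\<close> and, for \<open>n \<ge> 1\<close>, the recursion
  \<open>f n = -2 \<cdot> \<Sum>{(-1)^m f (n - m^2) | m \<ge> 1, m^2 \<le> n}\<close>.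
  For compositions into squares this follows by splitting off the first part, together with
  \<open>(-1)^(m^2) = (-1)^m\<close>.  For overpartitions it is the coefficientwise form of Gauss's identity
  \<open>\<Prod>(1 + q^j) / (1 - q^j) \<cdot> \<Sum>{(-1)^m q^(m^2) | m \<in> \<int>} = 1\<close>, which we only need modulo
  \<open>q^(2n+1)\<close> and derive from finite products: the q-binomial theorem gives
  \<open>(q;q^2)_n^2 = \<Sum>{(-1)^|n-k| [2n, k]_(q^2) q^((n-k)^2) | k \<le> 2n}\<close>, each \<open>[2n, k]_(q^2)\<close> agrees
  with \<open>1 / (q^2;q^2)_n\<close> to an order that compensates for the factor \<open>q^((n-k)^2)\<close>, and Euler's
  identity \<open>(-q;q)_\<infinity> (q;q^2)_\<infinity> = 1\<close> holds in the same truncated sense.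
\<close>

unbundle fps_syntax

section \<open>Gaussian binomial coefficients\<close>

fun qbinomial :: "'a::comm_ring_1 \<Rightarrow> nat \<Rightarrow> nat \<Rightarrow> 'a" where
  "qbinomial Q 0 k = (if k = 0 then 1 else 0)"
| "qbinomial Q (Suc m) 0 = 1"
| "qbinomial Q (Suc m) (Suc k) = qbinomial Q m k + Q ^ Suc k * qbinomial Q m (Suc k)"

lemma qbinomial_0_right [simp]: "qbinomial Q m 0 = 1"
  by (cases m) auto

lemma qbinomial_eq_0: "m < k \<Longrightarrow> qbinomial Q m k = 0"
proof (induction m arbitrary: k)
  case (Suc m) then show ?case by (cases k) auto
qed simp

lemma zero_choose_two [simp]: "0 choose 2 = 0"
  by (simp add: numeral_2_eq_2)

lemma Suc_choose_two: "Suc k choose 2 = (k choose 2) + k"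
  by (simp add: numeral_2_eq_2)

lemma two_mult_choose_two: "2 * (k choose 2) = k * (k - 1)"
  by (induction k) (auto simp: Suc_choose_two algebra_simps)

lemma qbinomial_theorem:
  fixes w z Q :: "'a::comm_ring_1"
  shows "(\<Prod>j<m. w + z * Q ^ j)
           = (\<Sum>k\<le>m. qbinomial Q m k * Q ^ (k choose 2) * z ^ k * w ^ (m - k))"
proof (induction m arbitrary: z)
  case 0 then show ?case by simp
next
  case (Suc m)
  define S where "S = (\<Sum>k\<le>m. qbinomial Q m k * Q ^ ((k choose 2) + k) * z ^ k * w ^ (m - k))"
  have "(\<Prod>j<Suc m. w + z * Q ^ j) = (w + z) * (\<Prod>j<m. w + (z * Q) * Q ^ j)"
    unfolding prod.lessThan_Suc_shift by (simp add: mult_ac)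
  also have "\<dots> = (w + z) * S"
    unfolding Suc.IH S_def
    by (intro arg_cong[where f="\<lambda>x. (w + z) * x"] sum.cong refl)
       (simp add: power_mult_distrib power_add mult_ac)
  also have "\<dots> = w * S + z * S" by (rule distrib_right)
  finally have prod_eq: "(\<Prod>j<Suc m. w + z * Q ^ j) = w * S + z * S" .
  have zS: "z * S = (\<Sum>k\<le>m. qbinomial Q m k * Q ^ (Suc k choose 2) * z ^ Suc k * w ^ (m - k))"
    unfolding S_def sum_distrib_left Suc_choose_two by (intro sum.cong refl) (simp add: mult_ac)
  have "w * S = (\<Sum>k\<le>Suc m. qbinomial Q m k * Q ^ ((k choose 2) + k) * z ^ k * w ^ (Suc m - k))"
    unfolding S_def sum_distrib_left
    by (simp add: qbinomial_eq_0 mult_ac Suc_diff_le)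
  also have "\<dots> = w ^ Suc m + (\<Sum>k\<le>m. Q ^ Suc k * qbinomial Q m (Suc k) * Q ^ (Suc k choose 2)
                                          * z ^ Suc k * w ^ (m - k))"
    by (subst sum.atMost_Suc_shift) (simp add: Suc_choose_two power_add mult_ac)
  finally have wS: "w * S = \<dots>" .
  have "(\<Sum>k\<le>Suc m. qbinomial Q (Suc m) k * Q ^ (k choose 2) * z ^ k * w ^ (Suc m - k))
     = w ^ Suc m + (\<Sum>k\<le>m. qbinomial Q m k * Q ^ (Suc k choose 2) * z ^ Suc k * w ^ (m - k))
       + (\<Sum>k\<le>m. Q ^ Suc k * qbinomial Q m (Suc k) * Q ^ (Suc k choose 2) * z ^ Suc k * w ^ (m - k))"
    by (subst sum.atMost_Suc_shift) (simp add: distrib_right sum.distrib)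
  then show ?case using prod_eq zS wS by simp
qed

definition qpochhammer :: "'a::comm_ring_1 \<Rightarrow> nat \<Rightarrow> 'a" where
  "qpochhammer Q n = (\<Prod>j<n. 1 - Q ^ Suc j)"

lemma qpochhammer_0 [simp]: "qpochhammer Q 0 = 1"
  by (simp add: qpochhammer_def)

lemma qpochhammer_Suc: "qpochhammer Q (Suc n) = qpochhammer Q n * (1 - Q ^ Suc n)"
  by (simp add: qpochhammer_def)

lemma qbinomial_mult_qpochhammer:
  "k \<le> m \<Longrightarrow> qbinomial Q m k * qpochhammer Q k * qpochhammer Q (m - k) = qpochhammer Q m"
proof (induction m arbitrary: k)
  case 0 then show ?case by simp
next
  case (Suc m)
  show ?case
  proof (cases k)
    case 0 then show ?thesis by simp
  next
    case (Suc j)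
    with Suc.prems have "j \<le> m" by simp
    have "qbinomial Q m j * qpochhammer Q (Suc j) * qpochhammer Q (m - j)
            = (qbinomial Q m j * qpochhammer Q j * qpochhammer Q (m - j)) * (1 - Q ^ Suc j)"
      by (simp only: qpochhammer_Suc mult_ac)
    also have "\<dots> = qpochhammer Q m * (1 - Q ^ Suc j)"
      using Suc.IH[OF \<open>j \<le> m\<close>] by simp
    finally have left: "qbinomial Q m j * qpochhammer Q (Suc j) * qpochhammer Q (m - j)
                          = qpochhammer Q m * (1 - Q ^ Suc j)" .
    have right: "Q ^ Suc j * qbinomial Q m (Suc j) * qpochhammer Q (Suc j) * qpochhammer Q (m - j)
                   = qpochhammer Q m * (Q ^ Suc j - Q ^ Suc m)"
    proof (cases "j = m")
      case True then show ?thesis by (simp add: qbinomial_eq_0)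
    next
      case False
      with \<open>j \<le> m\<close> have "Suc j \<le> m" by simp
      then have m_diff: "m - j = Suc (m - Suc j)" by simp
      have "Suc j + (m - j) = Suc m" using \<open>Suc j \<le> m\<close> by simp
      then have power_eq: "Q ^ Suc j * Q ^ (m - j) = Q ^ Suc m" by (metis power_add)
      have "Q ^ Suc j * qbinomial Q m (Suc j) * qpochhammer Q (Suc j) * qpochhammer Q (m - j)
          = Q ^ Suc j * (qbinomial Q m (Suc j) * qpochhammer Q (Suc j) * qpochhammer Q (m - Suc j))
              * (1 - Q ^ (m - j))"
        unfolding m_diff qpochhammer_Suc by (simp add: mult_ac)
      also have "\<dots> = qpochhammer Q m * (Q ^ Suc j - Q ^ Suc j * Q ^ (m - j))"
        using Suc.IH[OF \<open>Suc j \<le> m\<close>] by (simp add: algebra_simps)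
      finally show ?thesis unfolding power_eq .
    qed
    have "qbinomial Q (Suc m) k * qpochhammer Q k * qpochhammer Q (Suc m - k)
        = qbinomial Q m j * qpochhammer Q (Suc j) * qpochhammer Q (m - j)
          + Q ^ Suc j * qbinomial Q m (Suc j) * qpochhammer Q (Suc j) * qpochhammer Q (m - j)"
      using Suc by (simp add: distrib_right)
    also have "\<dots> = qpochhammer Q (Suc m)"
      unfolding left right by (simp add: qpochhammer_Suc algebra_simps)
    finally show ?thesis .
  qed
qed

lemma prod_lessThan_add:
  fixes f :: "nat \<Rightarrow> 'a::comm_monoid_mult"
  shows "(\<Prod>j<m + n. f j) = (\<Prod>j<m. f j) * (\<Prod>j<n. f (m + j))"
  by (induction n) (simp_all add: mult_ac)

definition absdiff :: "nat \<Rightarrow> nat \<Rightarrow> nat" where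
  "absdiff n k = (if k \<le> n then n - k else k - n)"

lemma minus_one_power_absdiff: "(-1 :: 'a::ring_1) ^ (n + k) = (-1) ^ absdiff n k"
proof (cases "k \<le> n")
  case True
  then have "n + k = absdiff n k + 2 * k" by (simp add: absdiff_def)
  then have "(-1 :: 'a) ^ (n + k) = (-1) ^ absdiff n k * ((-1) ^ 2) ^ k"
    by (simp only: power_add power_mult)
  then show ?thesis by simp
next
  case False
  then have "n + k = absdiff n k + 2 * n" by (simp add: absdiff_def)
  then have "(-1 :: 'a) ^ (n + k) = (-1) ^ absdiff n k * ((-1) ^ 2) ^ n"
    by (simp only: power_add power_mult)
  then show ?thesis by simp
qed

lemma sum_absdiff:
  fixes h :: "nat \<Rightarrow> 'a::comm_ring_1"
  shows "(\<Sum>k\<le>2*n. h (absdiff n k)) = h 0 + 2 * (\<Sum>m\<in>{1..n}. h m)"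
proof -
  have below: "(\<Sum>k<n. h (absdiff n k)) = (\<Sum>m\<in>{1..n}. h m)"
    by (rule sum.reindex_bij_witness[where i="\<lambda>m. n - m" and j="\<lambda>k. n - k"])
       (auto simp: absdiff_def)
  have above: "(\<Sum>k\<in>{n..2*n}. h (absdiff n k)) = (\<Sum>m\<le>n. h m)"
    by (rule sum.reindex_bij_witness[where i="\<lambda>m. m + n" and j="\<lambda>k. k - n"])
       (auto simp: absdiff_def)
  have zero: "(\<Sum>m\<le>n. h m) = h 0 + (\<Sum>m\<in>{1..n}. h m)"
  proof -
    have "{..n} = insert 0 {1..n}" by auto
    then show ?thesis by simp
  qed
  have split: "{..2*n} = {..<n} \<union> {n..2*n}" by auto
  have "(\<Sum>k\<le>2*n. h (absdiff n k))
          = (\<Sum>k<n. h (absdiff n k)) + (\<Sum>k\<in>{n..2*n}. h (absdiff n k))"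
    unfolding split by (rule sum.union_disjoint) auto
  also have "\<dots> = (\<Sum>m\<in>{1..n}. h m) + (h 0 + (\<Sum>m\<in>{1..n}. h m))"
    unfolding below above zero ..
  also have "\<dots> = h 0 + 2 * (\<Sum>m\<in>{1..n}. h m)"
    by (simp only: mult_2 add_ac)
  finally show ?thesis .
qed

lemma triangular_exponent_absdiff:
  assumes "k \<le> 2*n" "1 \<le> n"
  shows "2 * (k choose 2) + (2*n - 1) * (2*n - k)
           = absdiff n k ^ 2 + (2 * (n choose 2) + (2*n - 1) * n)"
  unfolding two_mult_choose_two
proof (cases "k \<le> n")
  case True
  then obtain a where a: "n = k + a" using le_Suc_ex by blast
  show "k * (k - 1) + (2*n - 1) * (2*n - k) = absdiff n k ^ 2 + (n * (n - 1) + (2*n - 1) * n)"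
  proof (cases k)
    case 0
    with assms a obtain b where "a = Suc b" by (cases a) auto
    then show ?thesis using 0 a by (simp add: absdiff_def algebra_simps power2_eq_square)
  next
    case (Suc k')
    then show ?thesis using a by (simp add: absdiff_def algebra_simps power2_eq_square)
  qed
next
  case False
  then obtain a where a: "k = n + Suc a" using less_imp_Suc_add[of n k] by auto
  with assms obtain b where b: "n = Suc a + b" using le_Suc_ex[of "Suc a" n] by auto
  have k: "k = Suc (Suc (2*a + b))" and n: "n = Suc (a + b)" using a b by simp_all
  show "k * (k - 1) + (2*n - 1) * (2*n - k) = absdiff n k ^ 2 + (n * (n - 1) + (2*n - 1) * n)"
    using False unfolding k n by (simp add: absdiff_def algebra_simps power2_eq_square)
qed

section \<open>A truncated form of Gauss's identity\<close>

definition odd_power_prod :: "nat \<Rightarrow> 'a::comm_ring_1 fps" where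
  "odd_power_prod n = (\<Prod>j<n. 1 - fps_X ^ (2*j + 1))"

lemma prod_neg_even_powers:
  "(\<Prod>j<n. - (fps_X ^ (2*j) :: 'a::comm_ring_1 fps)) = (-1) ^ n * fps_X ^ (2 * (n choose 2))"
proof (induction n)
  case (Suc n)
  have "fps_X ^ (2 * (Suc n choose 2)) = fps_X ^ (2 * (n choose 2)) * (fps_X ^ (2*n) :: 'a fps)"
    by (simp add: Suc_choose_two power_add algebra_simps)
  then show ?case using Suc by (simp add: algebra_simps)
qed simp

lemma prod_gap_expansion:
  assumes "1 \<le> n"
  shows "(\<Prod>j<2*n. fps_X ^ (2*n - 1) - (fps_X ^ 2) ^ j :: 'a::comm_ring_1 fps)
           = fps_X ^ (2 * (n choose 2) + (2*n - 1) * n)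
             * (\<Sum>k\<le>2*n. (-1) ^ k * qbinomial (fps_X ^ 2) (2*n) k * fps_X ^ (absdiff n k ^ 2))"
proof -
  let ?c = "2 * (n choose 2) + (2*n - 1) * n"
  have "(\<Prod>j<2*n. fps_X ^ (2*n - 1) - (fps_X ^ 2) ^ j :: 'a fps)
          = (\<Sum>k\<le>2*n. qbinomial (fps_X ^ 2) (2*n) k * (fps_X ^ 2) ^ (k choose 2) * (-1) ^ k
                          * (fps_X ^ (2*n - 1)) ^ (2*n - k))"
    using qbinomial_theorem[of "fps_X ^ (2*n - 1)" "-1" "fps_X ^ 2" "2*n"] by simp
  also have "\<dots> = (\<Sum>k\<le>2*n. fps_X ^ ?c * ((-1) ^ k * qbinomial (fps_X ^ 2) (2*n) k
                                                  * fps_X ^ (absdiff n k ^ 2)))"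
  proof (intro sum.cong refl)
    fix k assume "k \<in> {..2*n}"
    then have "2 * (k choose 2) + (2*n - 1) * (2*n - k) = absdiff n k ^ 2 + ?c"
      using triangular_exponent_absdiff assms by simp
    then have powers: "(fps_X ^ 2) ^ (k choose 2) * (fps_X ^ (2*n - 1)) ^ (2*n - k)
                         = (fps_X ^ (absdiff n k ^ 2 + ?c) :: 'a fps)"
      by (metis power_add power_mult)
    have "qbinomial (fps_X ^ 2) (2*n) k * (fps_X ^ 2) ^ (k choose 2) * (-1) ^ k
            * (fps_X ^ (2*n - 1)) ^ (2*n - k)
          = (-1) ^ k * qbinomial (fps_X ^ 2) (2*n) k
            * ((fps_X ^ 2) ^ (k choose 2) * (fps_X ^ (2*n - 1)) ^ (2*n - k) :: 'a fps)"
      by (simp only: mult_ac)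
    also have "\<dots> = fps_X ^ ?c * ((-1) ^ k * qbinomial (fps_X ^ 2) (2*n) k * fps_X ^ (absdiff n k ^ 2))"
      unfolding powers by (simp add: power_add mult_ac)
    finally show "qbinomial (fps_X ^ 2) (2*n) k * (fps_X ^ 2) ^ (k choose 2) * (-1) ^ k
                    * (fps_X ^ (2*n - 1)) ^ (2*n - k)
                  = (fps_X ^ ?c :: 'a fps) * ((-1) ^ k * qbinomial (fps_X ^ 2) (2*n) k * fps_X ^ (absdiff n k ^ 2))" .
  qed
  finally show ?thesis by (simp add: sum_distrib_left)
qed

lemma prod_gap_lower_half:
  "(\<Prod>j<n. fps_X ^ (2*n - 1) - (fps_X ^ 2) ^ j :: 'a::comm_ring_1 fps)
     = (-1) ^ n * fps_X ^ (2 * (n choose 2)) * odd_power_prod n"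
proof -
  have "(\<Prod>j<n. fps_X ^ (2*n - 1) - (fps_X ^ 2) ^ j :: 'a fps)
          = (\<Prod>j<n. - (fps_X ^ (2*j)) * (1 - fps_X ^ (2 * (n - Suc j) + 1)))"
  proof (intro prod.cong refl)
    fix j assume "j \<in> {..<n}"
    then have "2*n - 1 = 2*j + (2 * (n - Suc j) + 1)" by simp
    then have "fps_X ^ (2*n - 1) = fps_X ^ (2*j) * (fps_X ^ (2 * (n - Suc j) + 1) :: 'a fps)"
      by (simp add: power_add)
    then show "fps_X ^ (2*n - 1) - (fps_X ^ 2) ^ j
                 = - (fps_X ^ (2*j)) * (1 - (fps_X ^ (2 * (n - Suc j) + 1) :: 'a fps))"
      by (simp add: algebra_simps flip: power_mult)
  qed
  also have "\<dots> = (-1) ^ n * fps_X ^ (2 * (n choose 2)) * odd_power_prod n"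
  proof -
    have "(\<Prod>j<n. 1 - fps_X ^ (2 * (n - Suc j) + 1)) = (odd_power_prod n :: 'a fps)"
      unfolding odd_power_prod_def by (rule prod.nat_diff_reindex)
    then show ?thesis by (simp only: prod.distrib prod_neg_even_powers)
  qed
  finally show ?thesis .
qed

lemma prod_gap_upper_half:
  assumes "1 \<le> n"
  shows "(\<Prod>j<n. fps_X ^ (2*n - 1) - (fps_X ^ 2) ^ (n + j) :: 'a::comm_ring_1 fps)
           = fps_X ^ ((2*n - 1) * n) * odd_power_prod n"
proof -
  have "(\<Prod>j<n. fps_X ^ (2*n - 1) - (fps_X ^ 2) ^ (n + j) :: 'a fps)
          = (\<Prod>j<n. fps_X ^ (2*n - 1) * (1 - fps_X ^ (2*j + 1)))"
  proof (intro prod.cong refl)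
    fix j
    have exponent: "2 * (n + j) = (2*n - 1) + (2*j + 1)" using assms by simp
    have "(fps_X ^ 2) ^ (n + j) = (fps_X ^ (2 * (n + j)) :: 'a fps)"
      by (rule power_mult[symmetric])
    also have "\<dots> = fps_X ^ (2*n - 1) * fps_X ^ (2*j + 1)"
      by (simp only: exponent power_add)
    finally show "fps_X ^ (2*n - 1) - (fps_X ^ 2) ^ (n + j)
                    = fps_X ^ (2*n - 1) * (1 - (fps_X ^ (2*j + 1) :: 'a fps))"
      by (simp add: algebra_simps)
  qed
  then show ?thesis by (simp add: prod.distrib odd_power_prod_def power_mult)
qed

lemma prod_gap_factorization:
  assumes "1 \<le> n"
  shows "(\<Prod>j<2*n. fps_X ^ (2*n - 1) - (fps_X ^ 2) ^ j :: 'a::comm_ring_1 fps)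
           = fps_X ^ (2 * (n choose 2) + (2*n - 1) * n) * ((-1) ^ n * odd_power_prod n ^ 2)"
proof -
  have "(\<Prod>j<2*n. fps_X ^ (2*n - 1) - (fps_X ^ 2) ^ j :: 'a fps)
          = (\<Prod>j<n. fps_X ^ (2*n - 1) - (fps_X ^ 2) ^ j) * (\<Prod>j<n. fps_X ^ (2*n - 1) - (fps_X ^ 2) ^ (n + j))"
    using prod_lessThan_add[of "\<lambda>j. fps_X ^ (2*n - 1) - (fps_X ^ 2) ^ j :: 'a fps" n n]
    by (simp only: mult_2)
  also have "\<dots> = fps_X ^ (2 * (n choose 2) + (2*n - 1) * n) * ((-1) ^ n * odd_power_prod n ^ 2)"
    unfolding prod_gap_lower_half prod_gap_upper_half[OF assms]
    by (simp add: power_add power2_eq_square mult_ac)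
  finally show ?thesis .
qed

lemma odd_power_prod_square:
  "(odd_power_prod n ^ 2 :: 'a::idom fps)
     = (\<Sum>k\<le>2*n. (-1) ^ absdiff n k * qbinomial (fps_X ^ 2) (2*n) k * fps_X ^ (absdiff n k ^ 2))"
proof (cases "n = 0")
  case True then show ?thesis by (simp add: odd_power_prod_def absdiff_def)
next
  case False
  let ?c = "2 * (n choose 2) + (2*n - 1) * n"
  from False have n: "1 \<le> n" by simp
  have "fps_X ^ ?c * ((-1) ^ n * odd_power_prod n ^ 2)
      = fps_X ^ ?c * (\<Sum>k\<le>2*n. (-1) ^ k * qbinomial (fps_X ^ 2) (2*n) k * (fps_X ^ (absdiff n k ^ 2) :: 'a fps))"
    using prod_gap_factorization[OF n, symmetric] prod_gap_expansion[OF n] by (rule trans)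
  then have cancelled: "(-1) ^ n * odd_power_prod n ^ 2
               = (\<Sum>k\<le>2*n. (-1) ^ k * qbinomial (fps_X ^ 2) (2*n) k * (fps_X ^ (absdiff n k ^ 2) :: 'a fps))"
    by simp
  have "(-1) ^ n * (-1) ^ n = (1 :: 'a fps)" by (simp flip: power_mult_distrib)
  then have "odd_power_prod n ^ 2 = (-1) ^ n * ((-1) ^ n * (odd_power_prod n ^ 2 :: 'a fps))"
    by (simp only: mult.assoc[symmetric] mult_1)
  also have "\<dots> = (-1) ^ n * (\<Sum>k\<le>2*n. (-1) ^ k * qbinomial (fps_X ^ 2) (2*n) k * fps_X ^ (absdiff n k ^ 2))"
    by (simp only: cancelled)
  also have "\<dots> = (\<Sum>k\<le>2*n. (-1) ^ absdiff n k * qbinomial (fps_X ^ 2) (2*n) k * fps_X ^ (absdiff n k ^ 2))"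
    unfolding sum_distrib_left
    by (intro sum.cong refl) (simp add: power_add mult_ac flip: minus_one_power_absdiff)
  finally show ?thesis .
qed

lemma fps_X_power_dvd_nth_eq_0:
  "fps_X ^ a dvd (f :: 'a::comm_ring_1 fps) \<Longrightarrow> i < a \<Longrightarrow> f $ i = 0"
  by (auto simp: dvd_def fps_X_power_mult_nth)

lemma fps_X_power_dvd_mult_cancel:
  "fps_X ^ a dvd g * f \<Longrightarrow> f $ 0 \<noteq> 0 \<Longrightarrow> fps_X ^ a dvd (g :: 'a::field fps)"
  by (simp add: dvd_mult_unit_iff)

lemma qpochhammer_nth_0: "Q $ 0 = 0 \<Longrightarrow> qpochhammer (Q :: 'a::comm_ring_1 fps) n $ 0 = 1"
  by (induction n) (simp_all add: qpochhammer_Suc)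

lemma qpochhammer_X_squared_diff:
  "a \<le> b \<Longrightarrow> fps_X ^ (2*a + 2) dvd qpochhammer (fps_X ^ 2) b - (qpochhammer (fps_X ^ 2) a :: 'a::comm_ring_1 fps)"
proof (induction b rule: dec_induct)
  case (step c)
  have "(fps_X ^ 2) ^ Suc c = (fps_X ^ (2 * Suc c) :: 'a fps)"
    by (rule power_mult[symmetric])
  then have diff: "qpochhammer (fps_X ^ 2) (Suc c) - qpochhammer (fps_X ^ 2) a
                     = (qpochhammer (fps_X ^ 2) c - qpochhammer (fps_X ^ 2) a)
                       - qpochhammer (fps_X ^ 2) c * (fps_X ^ (2 * Suc c) :: 'a fps)"
    by (simp only: qpochhammer_Suc right_diff_distrib mult_1_right) simp
  have "fps_X ^ (2*a + 2) dvd qpochhammer (fps_X ^ 2) c * (fps_X ^ (2 * Suc c) :: 'a fps)"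
    using step.hyps(1) by (intro dvd_mult le_imp_power_dvd) simp
  with step.IH show ?case unfolding diff by (rule dvd_diff)
qed simp

lemma qpochhammer_X_squared_diff_min:
  "fps_X ^ (2 * min a b + 2) dvd qpochhammer (fps_X ^ 2) a - (qpochhammer (fps_X ^ 2) b :: 'a::comm_ring_1 fps)"
proof (cases "a \<le> b")
  case True
  then have "fps_X ^ (2*a + 2) dvd - (qpochhammer (fps_X ^ 2) b - (qpochhammer (fps_X ^ 2) a :: 'a fps))"
    using qpochhammer_X_squared_diff by (simp only: dvd_minus_iff)
  with True show ?thesis by (simp add: min_absorb1)
next
  case False then show ?thesis
    using qpochhammer_X_squared_diff[of b a] by (simp add: min_def)
qed

text \<open>All \<open>qpochhammer (fps_X ^ 2) m\<close> with \<open>m \<ge> \<mu>\<close> agree modulo \<open>fps_X ^ (2 * \<mu> + 2)\<close>, so in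
  \<open>qbinomial Q (2*n) k = (Q;Q)_(2n) / ((Q;Q)_k (Q;Q)_(2n-k))\<close> all three Pochhammer symbols
  may be replaced by \<open>(Q;Q)_n\<close> modulo this power.\<close>

lemma qbinomial_qpochhammer_cong:
  assumes "k \<le> 2*n"
  shows "fps_X ^ (2 * min k (2*n - k) + 2)
           dvd qbinomial (fps_X ^ 2) (2*n) k * qpochhammer (fps_X ^ 2) n - (1 :: 'a::field fps)"
proof -
  define \<mu> where "\<mu> = min k (2*n - k)"
  define q :: "'a fps" where "q = qbinomial (fps_X ^ 2) (2*n) k"
  define P :: "nat \<Rightarrow> 'a fps" where "P = qpochhammer (fps_X ^ 2)"
  have cong: "fps_X ^ (2*\<mu> + 2) dvd P x - P y" if "\<mu> \<le> x" "\<mu> \<le> y" for x y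
  proof -
    have "2*\<mu> + 2 \<le> 2 * min x y + 2" using that by simp
    then show ?thesis
      unfolding P_def by (rule dvd_trans[OF le_imp_power_dvd qpochhammer_X_squared_diff_min])
  qed
  have "\<mu> \<le> n" "\<mu> \<le> k" "\<mu> \<le> 2*n - k" "\<mu> \<le> 2*n" unfolding \<mu>_def by auto
  then have congs: "fps_X ^ (2*\<mu> + 2) dvd P n - P (2*n - k)" "fps_X ^ (2*\<mu> + 2) dvd P n - P k"
    "fps_X ^ (2*\<mu> + 2) dvd P (2*n) - P n"
    by (blast intro: cong)+
  have "(q * P n - 1) * P n = q * (P n * (P n - P (2*n - k)) + P (2*n - k) * (P n - P k))
                                + (q * P k * P (2*n - k) - P n)"
    by (simp add: algebra_simps)
  also have "q * P k * P (2*n - k) = P (2*n)"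
    unfolding q_def P_def using qbinomial_mult_qpochhammer assms by blast
  finally have "fps_X ^ (2*\<mu> + 2) dvd (q * P n - 1) * P n"
    using congs by (simp add: dvd_add dvd_mult)
  then show ?thesis unfolding \<mu>_def q_def P_def
    by (rule fps_X_power_dvd_mult_cancel) (simp add: qpochhammer_nth_0)
qed

definition theta_partial :: "nat \<Rightarrow> 'a::comm_ring_1 fps" where
  "theta_partial n = 1 + 2 * (\<Sum>m\<in>{1..n}. (-1) ^ m * fps_X ^ (m^2))"

lemma theta_partial_eq_sum_absdiff:
  "theta_partial n = (\<Sum>k\<le>2*n. (-1) ^ absdiff n k * fps_X ^ (absdiff n k ^ 2))"
  unfolding theta_partial_def by (simp add: sum_absdiff[of "\<lambda>d. (-1) ^ d * fps_X ^ (d^2)"])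

lemma min_add_absdiff: "k \<le> 2*n \<Longrightarrow> min k (2*n - k) + absdiff n k = n"
  by (auto simp: absdiff_def min_def)

lemma odd_power_prod_square_cong_theta:
  "fps_X ^ (2*n + 1)
     dvd odd_power_prod n ^ 2 * qpochhammer (fps_X ^ 2) n - (theta_partial n :: 'a::field fps)"
proof -
  have "odd_power_prod n ^ 2 * qpochhammer (fps_X ^ 2) n - (theta_partial n :: 'a fps)
          = (\<Sum>k\<le>2*n. (-1) ^ absdiff n k * fps_X ^ (absdiff n k ^ 2)
                          * (qbinomial (fps_X ^ 2) (2*n) k * qpochhammer (fps_X ^ 2) n - 1))"
    unfolding odd_power_prod_square theta_partial_eq_sum_absdiff sum_distrib_right
      sum_subtractf[symmetric]
    by (intro sum.cong refl) (simp add: algebra_simps)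
  also have "fps_X ^ (2*n + 1) dvd \<dots>"
  proof (rule dvd_sum)
    fix k assume "k \<in> {..2*n}"
    then have k: "k \<le> 2*n" by simp
    define d where "d = absdiff n k"
    define \<mu> where "\<mu> = min k (2*n - k)"
    have "2*d \<le> d^2 + 1" by (cases d) (auto simp: power2_eq_square)
    moreover have "\<mu> + d = n" unfolding \<mu>_def d_def using min_add_absdiff[OF k] .
    ultimately have "2*n + 1 \<le> d^2 + (2*\<mu> + 2)" by linarith
    then have "fps_X ^ (2*n + 1) dvd (fps_X ^ (d^2) * fps_X ^ (2*\<mu> + 2) :: 'a fps)"
      unfolding power_add[symmetric] by (rule le_imp_power_dvd)
    also have "\<dots> dvd fps_X ^ (d^2) * (qbinomial (fps_X ^ 2) (2*n) k * qpochhammer (fps_X ^ 2) n - 1)"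
      unfolding \<mu>_def by (rule mult_dvd_mono[OF dvd_refl qbinomial_qpochhammer_cong[OF k]])
    finally show "fps_X ^ (2*n + 1) dvd (-1) ^ absdiff n k * fps_X ^ (absdiff n k ^ 2)
                    * (qbinomial (fps_X ^ 2) (2*n) k * qpochhammer (fps_X ^ 2) n - (1 :: 'a fps))"
      unfolding d_def mult.assoc by (rule dvd_mult)
  qed
  finally show ?thesis .
qed

definition plus_power_prod :: "nat \<Rightarrow> 'a::comm_ring_1 fps" where
  "plus_power_prod n = (\<Prod>j<n. 1 + fps_X ^ Suc j)"

lemma odd_power_prod_mult_qpochhammer:
  "odd_power_prod n * qpochhammer (fps_X ^ 2) n = (qpochhammer fps_X (2*n) :: 'a::comm_ring_1 fps)"
proof (induction n)
  case 0 then show ?case by (simp add: odd_power_prod_def)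
next
  case (Suc n)
  have "(fps_X ^ 2) ^ Suc n = (fps_X ^ (2 * Suc n) :: 'a fps)"
    by (rule power_mult[symmetric])
  also have "2 * Suc n = Suc (Suc (2*n))" by simp
  finally have "odd_power_prod (Suc n) * qpochhammer (fps_X ^ 2) (Suc n)
      = (odd_power_prod n * qpochhammer (fps_X ^ 2) n)
        * ((1 - fps_X ^ (2*n + 1)) * (1 - (fps_X ^ Suc (Suc (2*n)) :: 'a fps)))"
    by (simp only: odd_power_prod_def qpochhammer_Suc prod.lessThan_Suc mult_ac)
  also have "\<dots> = qpochhammer fps_X (2 * Suc n)"
    unfolding Suc.IH by (simp add: qpochhammer_Suc mult.assoc)
  finally show ?case .
qed

lemma plus_power_prod_mult_qpochhammer:
  "plus_power_prod n * qpochhammer fps_X n = (qpochhammer (fps_X ^ 2) n :: 'a::comm_ring_1 fps)"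
proof (induction n)
  case 0 then show ?case by (simp add: plus_power_prod_def)
next
  case (Suc n)
  have "(1 + fps_X ^ Suc n) * (1 - fps_X ^ Suc n) = 1 - ((fps_X ^ 2) ^ Suc n :: 'a fps)"
    by (simp add: algebra_simps power2_eq_square power_mult_distrib)
  moreover have "plus_power_prod (Suc n) * qpochhammer fps_X (Suc n)
      = (plus_power_prod n * qpochhammer fps_X n) * ((1 + fps_X ^ Suc n) * (1 - (fps_X ^ Suc n :: 'a fps)))"
    by (simp add: plus_power_prod_def qpochhammer_Suc mult_ac)
  ultimately show ?case using Suc.IH by (simp add: qpochhammer_Suc)
qed

lemma odd_power_prod_mult_plus_power_prod_cong:
  "fps_X ^ (2*n + 2) dvd odd_power_prod n * plus_power_prod (2*n) - (1 :: 'a::field fps)"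
proof -
  have "(odd_power_prod n * plus_power_prod (2*n) - 1) * qpochhammer (fps_X ^ 2) n
          = plus_power_prod (2*n) * (odd_power_prod n * qpochhammer (fps_X ^ 2) n)
            - (qpochhammer (fps_X ^ 2) n :: 'a fps)"
    by (simp add: algebra_simps)
  also have "\<dots> = qpochhammer (fps_X ^ 2) (2*n) - qpochhammer (fps_X ^ 2) n"
    by (simp only: odd_power_prod_mult_qpochhammer plus_power_prod_mult_qpochhammer)
  finally have eq: "(odd_power_prod n * plus_power_prod (2*n) - 1) * qpochhammer (fps_X ^ 2) n
                      = qpochhammer (fps_X ^ 2) (2*n) - (qpochhammer (fps_X ^ 2) n :: 'a fps)" .
  have "fps_X ^ (2*n + 2) dvd (odd_power_prod n * plus_power_prod (2*n) - 1) * (qpochhammer (fps_X ^ 2) n :: 'a fps)"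
    unfolding eq by (rule qpochhammer_X_squared_diff) simp
  then show ?thesis
    by (rule fps_X_power_dvd_mult_cancel) (simp add: qpochhammer_nth_0)
qed

lemma theta_mult_plus_power_prod_cong:
  "fps_X ^ (2*n + 1) dvd theta_partial n * plus_power_prod (2*n) - (qpochhammer fps_X (2*n) :: 'a::field fps)"
proof -
  let ?O = "odd_power_prod n :: 'a fps" and ?D = "plus_power_prod (2*n) :: 'a fps"
  let ?T = "theta_partial n :: 'a fps" and ?P = "qpochhammer (fps_X ^ 2) n :: 'a fps"
  have "?T * ?D - qpochhammer fps_X (2*n) = ?T * ?D - ?O * ?P"
    by (simp only: odd_power_prod_mult_qpochhammer)
  also have "\<dots> = - ((?O ^ 2 * ?P - ?T) * ?D) + (?O * ?P) * (?O * ?D - 1)"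
    by (simp add: algebra_simps power2_eq_square)
  also have "?O * ?P = qpochhammer fps_X (2*n)"
    by (rule odd_power_prod_mult_qpochhammer)
  finally have eq: "?T * ?D - qpochhammer fps_X (2*n)
                      = - ((?O ^ 2 * ?P - ?T) * ?D) + qpochhammer fps_X (2*n) * (?O * ?D - 1)" .
  have "fps_X ^ (2*n + 1) dvd - ((?O ^ 2 * ?P - ?T) * ?D)"
    unfolding dvd_minus_iff by (rule dvd_mult2[OF odd_power_prod_square_cong_theta])
  moreover have "fps_X ^ (2*n + 1) dvd ?O * ?D - 1"
    using le_imp_power_dvd[of "2*n + 1" "2*n + 2"] odd_power_prod_mult_plus_power_prod_cong
    by (rule dvd_trans) simp
  then have "fps_X ^ (2*n + 1) dvd qpochhammer fps_X (2*n) * (?O * ?D - 1)"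
    by (rule dvd_mult)
  ultimately show ?thesis unfolding eq by (rule dvd_add)
qed

text \<open>\<open>overpartition_factor j = (1 + X^j) / (1 - X^j) = 1 + 2 \<cdot> \<Sum>{X^(t j) | t \<ge> 1}\<close>: a part \<open>j\<close>
  occurring \<open>t \<ge> 1\<close> times may or may not be overlined.\<close>

definition overpartition_factor :: "nat \<Rightarrow> 'a::comm_ring_1 fps" where
  "overpartition_factor j = Abs_fps (\<lambda>i. if i = 0 then 1 else if j dvd i then 2 else 0)"

definition overpartition_gf :: "nat \<Rightarrow> 'a::comm_ring_1 fps" where
  "overpartition_gf m = (\<Prod>j<m. overpartition_factor (Suc j))"

lemma overpartition_factor_mult:
  assumes "1 \<le> j"
  shows "overpartition_factor j * (1 - fps_X ^ j) = (1 + fps_X ^ j :: 'a::comm_ring_1 fps)"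
proof (rule fps_ext)
  fix i
  show "(overpartition_factor j * (1 - fps_X ^ j)) $ i = (1 + fps_X ^ j :: 'a fps) $ i"
  proof (cases "i < j")
    case True
    then show ?thesis using assms
      by (auto simp: overpartition_factor_def right_diff_distrib fps_X_power_mult_right_nth
               dest: dvd_imp_le)
  next
    case False
    then have "j dvd i \<longleftrightarrow> j dvd (i - j)" by (simp add: dvd_minus_self)
    then show ?thesis using False assms
      by (auto simp: overpartition_factor_def right_diff_distrib fps_X_power_mult_right_nth)
  qed
qed

lemma overpartition_gf_Suc:
  "overpartition_gf (Suc k) = overpartition_factor (Suc k) * overpartition_gf k"
  by (simp add: overpartition_gf_def mult.commute)

lemma overpartition_gf_mult_qpochhammer:
  "overpartition_gf m * qpochhammer fps_X m = (plus_power_prod m :: 'a::comm_ring_1 fps)"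
proof (induction m)
  case 0 then show ?case by (simp add: overpartition_gf_def plus_power_prod_def)
next
  case (Suc m)
  have "overpartition_gf (Suc m) * qpochhammer fps_X (Suc m)
          = (overpartition_gf m * qpochhammer fps_X m)
            * (overpartition_factor (Suc m) * (1 - fps_X ^ Suc m) :: 'a fps)"
    by (simp add: overpartition_gf_Suc qpochhammer_Suc mult_ac)
  also have "overpartition_factor (Suc m) * (1 - fps_X ^ Suc m) = (1 + fps_X ^ Suc m :: 'a fps)"
    by (rule overpartition_factor_mult) simp
  finally show ?case
    unfolding Suc.IH by (simp add: plus_power_prod_def)
qed

lemma theta_mult_overpartition_gf_cong:
  "fps_X ^ (2*n + 1) dvd theta_partial n * overpartition_gf (2*n) - (1 :: 'a::field fps)"
proof -
  have "(theta_partial n * overpartition_gf (2*n) - 1) * qpochhammer fps_X (2*n)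
          = theta_partial n * plus_power_prod (2*n) - (qpochhammer fps_X (2*n) :: 'a fps)"
    by (simp add: algebra_simps flip: overpartition_gf_mult_qpochhammer)
  then have "fps_X ^ (2*n + 1) dvd (theta_partial n * overpartition_gf (2*n) - 1) * (qpochhammer fps_X (2*n) :: 'a fps)"
    using theta_mult_plus_power_prod_cong by simp
  then show ?thesis
    by (rule fps_X_power_dvd_mult_cancel) (simp add: qpochhammer_nth_0)
qed

lemma overpartition_gf_nth_recurrence:
  assumes "1 \<le> i" "i \<le> 2*n"
  shows "overpartition_gf (2*n) $ i
           + 2 * (\<Sum>m\<in>{1..n}. (-1) ^ m * (if i < m^2 then 0 else overpartition_gf (2*n) $ (i - m^2)))
         = (0 :: 'a::field)"
proof -
  let ?F = "overpartition_gf (2*n) :: 'a fps"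
  have vanishes: "(theta_partial n * ?F - 1) $ i = 0"
    by (rule fps_X_power_dvd_nth_eq_0[OF theta_mult_overpartition_gf_cong]) (use assms in simp)
  have const: "(2 :: 'a fps) * (-1) ^ m = fps_const (2 * (-1) ^ m)" for m
    by (simp flip: fps_const_power fps_const_mult fps_const_neg add: numeral_fps_const)
  have coeff: "(2 * ((-1) ^ m * G)) $ j = 2 * ((-1) ^ m * G $ j)" for m j and G :: "'a fps"
    by (simp only: mult.assoc[symmetric] const fps_mult_left_const_nth)
  have "theta_partial n * ?F = ?F + (\<Sum>m\<in>{1..n}. 2 * (-1) ^ m * (fps_X ^ (m^2) * ?F))"
    by (simp add: theta_partial_def algebra_simps sum_distrib_left sum_distrib_right)
  with vanishes show ?thesis
    using assms(1) by (simp add: fps_sum_nth coeff fps_X_power_mult_nth sum_distrib_left mult.assoc)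
qed

section \<open>Overpartitions with bounded parts\<close>

definition bounded_overpartitions :: "nat \<Rightarrow> nat \<Rightarrow> (nat multiset \<times> nat set) set" where
  "bounded_overpartitions k n
     = {(M, S). (\<forall>x\<in>#M. 0 < x \<and> x \<le> k) \<and> sum_mset M = n \<and> S \<subseteq> set_mset M}"

lemma sum_mset_filter_partition:
  "sum_mset (M :: nat multiset) = sum_mset (filter_mset P M) + sum_mset (filter_mset (\<lambda>x. \<not> P x) M)"
  using multiset_partition[of M P] by (metis sum_mset.union)

lemma count_mult_le_sum_mset: "count M x * x \<le> sum_mset (M :: nat multiset)"
  using sum_mset_filter_partition[of M "\<lambda>y. y = x"] by (simp add: filter_eq_replicate_mset)

lemma mem_le_sum_mset:
  assumes "x \<in># M"
  shows "x \<le> sum_mset (M :: nat multiset)"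
proof -
  from assms have "x \<le> count M x * x" by simp
  then show ?thesis using count_mult_le_sum_mset[of M x] by linarith
qed

lemma bounded_overpartitions_eq: "n \<le> k \<Longrightarrow> bounded_overpartitions k n = overpartitions n"
  unfolding bounded_overpartitions_def overpartitions_def using mem_le_sum_mset by fastforce

lemma bounded_overpartitions_0:
  "bounded_overpartitions 0 n = (if n = 0 then {({#}, {})} else {})"
proof -
  have "(\<forall>x\<in>#M. 0 < x \<and> x \<le> (0::nat)) \<longleftrightarrow> M = {#}" for M
    by (cases "M = {#}") (auto simp: multiset_nonemptyE)
  then show ?thesis unfolding bounded_overpartitions_def by auto
qed

text \<open>Overpartitions with parts at most \<open>k + 1\<close> are classified by the number \<open>t\<close> of parts
  equal to \<open>k + 1\<close>; for \<open>t \<ge> 1\<close> removing them leaves an overpartition with parts at most \<open>k\<close>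
  together with the information whether \<open>k + 1\<close> was overlined.\<close>

definition add_largest_parts ::
    "nat \<Rightarrow> nat \<Rightarrow> (nat multiset \<times> nat set) \<times> bool \<Rightarrow> nat multiset \<times> nat set" where
  "add_largest_parts k t
     = (\<lambda>((M, S), b). (M + replicate_mset t (Suc k), if b then insert (Suc k) S else S))"

definition remove_largest_parts ::
    "nat \<Rightarrow> nat multiset \<times> nat set \<Rightarrow> (nat multiset \<times> nat set) \<times> bool" where
  "remove_largest_parts k = (\<lambda>(M, S). ((filter_mset (\<lambda>x. x \<le> k) M, S - {Suc k}), Suc k \<in> S))"

abbreviation overpartitions_with_count :: "nat \<Rightarrow> nat \<Rightarrow> nat \<Rightarrow> (nat multiset \<times> nat set) set" where
  "overpartitions_with_count k n t \<equiv> {(M, S) \<in> bounded_overpartitions (Suc k) n. count M (Suc k) = t}"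

lemma overpartitions_with_count_0:
  "overpartitions_with_count k n 0 = bounded_overpartitions k n"
proof -
  have "(\<forall>x\<in>#M. 0 < x \<and> x \<le> Suc k) \<and> count M (Suc k) = 0 \<longleftrightarrow> (\<forall>x\<in>#M. 0 < x \<and> x \<le> k)" for M
    by (metis count_eq_zero_iff le_Suc_eq Suc_n_not_le_n)
  then show ?thesis unfolding bounded_overpartitions_def by auto
qed

lemma filter_mset_not_le_eq_replicate:
  assumes "\<forall>x\<in>#M. x \<le> Suc k"
  shows "filter_mset (\<lambda>x. \<not> x \<le> k) M = replicate_mset (count M (Suc k)) (Suc k)"
proof -
  have "filter_mset (\<lambda>x. \<not> x \<le> k) M = filter_mset (\<lambda>x. x = Suc k) M"
    by (rule filter_mset_cong0) (use assms le_Suc_eq in fastforce)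
  then show ?thesis by (simp add: filter_eq_replicate_mset)
qed

lemma add_largest_parts_mem:
  assumes "1 \<le> t" "t * Suc k \<le> n" "p \<in> bounded_overpartitions k (n - t * Suc k)"
  shows "add_largest_parts k t (p, b) \<in> overpartitions_with_count k n t"
proof -
  obtain M S where p: "p = (M, S)" and M: "\<forall>x\<in>#M. 0 < x \<and> x \<le> k"
    and sum: "sum_mset M = n - t * Suc k" and S: "S \<subseteq> set_mset M"
    using assms(3) unfolding bounded_overpartitions_def by auto
  have "count M (Suc k) = 0" using M by (metis count_eq_zero_iff Suc_n_not_le_n)
  moreover have "\<forall>x\<in>#M + replicate_mset t (Suc k). 0 < x \<and> x \<le> Suc k" using M assms(1) by auto
  moreover have "sum_mset (M + replicate_mset t (Suc k)) = n" using sum assms(2) by simp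
  moreover have "(if b then insert (Suc k) S else S) \<subseteq> set_mset (M + replicate_mset t (Suc k))"
    using S assms(1) by auto
  ultimately show ?thesis
    unfolding p add_largest_parts_def bounded_overpartitions_def by simp
qed

lemma remove_largest_parts_mem:
  assumes "p \<in> overpartitions_with_count k n t"
  shows "remove_largest_parts k p \<in> bounded_overpartitions k (n - t * Suc k) \<times> UNIV"
proof -
  obtain M S where p: "p = (M, S)" and M: "\<forall>x\<in>#M. 0 < x \<and> x \<le> Suc k"
    and sum: "sum_mset M = n" and S: "S \<subseteq> set_mset M" and t: "count M (Suc k) = t"
    using assms unfolding bounded_overpartitions_def by auto
  have "filter_mset (\<lambda>x. \<not> x \<le> k) M = replicate_mset t (Suc k)"
    using filter_mset_not_le_eq_replicate[of M k] M t by auto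
  then have sum': "sum_mset (filter_mset (\<lambda>x. x \<le> k) M) = n - t * Suc k"
    using sum_mset_filter_partition[of M "\<lambda>x. x \<le> k"] sum by simp
  have S': "S - {Suc k} \<subseteq> set_mset (filter_mset (\<lambda>x. x \<le> k) M)"
    using S M by (auto simp: le_Suc_eq)
  have M': "\<forall>x\<in>#filter_mset (\<lambda>x. x \<le> k) M. 0 < x \<and> x \<le> k" using M by auto
  show ?thesis
    unfolding p remove_largest_parts_def bounded_overpartitions_def using M' sum' S' by simp
qed

lemma remove_add_largest_parts:
  assumes "p \<in> bounded_overpartitions k m"
  shows "remove_largest_parts k (add_largest_parts k t (p, b)) = (p, b)"
proof -
  obtain M S where p: "p = (M, S)" and M: "\<forall>x\<in>#M. 0 < x \<and> x \<le> k" and S: "S \<subseteq> set_mset M"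
    using assms unfolding bounded_overpartitions_def by auto
  have "filter_mset (\<lambda>x. x \<le> k) M = M"
    using M by (simp add: filter_mset_eq_conv)
  moreover have "filter_mset (\<lambda>x. x \<le> k) (replicate_mset t (Suc k)) = {#}"
    by (cases t) auto
  moreover have "Suc k \<notin> S" using S M by fastforce
  ultimately show ?thesis
    unfolding p add_largest_parts_def remove_largest_parts_def by auto
qed

lemma add_remove_largest_parts:
  assumes "p \<in> overpartitions_with_count k n t"
  shows "add_largest_parts k t (remove_largest_parts k p) = p"
proof -
  obtain M S where p: "p = (M, S)" and M: "\<forall>x\<in>#M. 0 < x \<and> x \<le> Suc k"
    and t: "count M (Suc k) = t"
    using assms unfolding bounded_overpartitions_def by auto
  have "filter_mset (\<lambda>x. x \<le> k) M + replicate_mset t (Suc k) = M"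
    using multiset_partition[of M "\<lambda>x. x \<le> k"] filter_mset_not_le_eq_replicate[of M k] M t by auto
  then show ?thesis
    unfolding p add_largest_parts_def remove_largest_parts_def by auto
qed

lemma bij_betw_add_largest_parts:
  assumes "1 \<le> t" "t * Suc k \<le> n"
  shows "bij_betw (add_largest_parts k t)
           (bounded_overpartitions k (n - t * Suc k) \<times> UNIV) (overpartitions_with_count k n t)"
proof (rule bij_betw_byWitness[where f'="remove_largest_parts k"])
  show "\<forall>a\<in>bounded_overpartitions k (n - t * Suc k) \<times> UNIV.
          remove_largest_parts k (add_largest_parts k t a) = a"
    using remove_add_largest_parts by (simp add: Ball_def)
  show "\<forall>p\<in>overpartitions_with_count k n t. add_largest_parts k t (remove_largest_parts k p) = p"
    by (intro ballI add_remove_largest_parts)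
  show "add_largest_parts k t ` (bounded_overpartitions k (n - t * Suc k) \<times> UNIV)
          \<subseteq> overpartitions_with_count k n t"
    using add_largest_parts_mem[OF assms] by (simp add: image_subset_iff)
  show "remove_largest_parts k ` overpartitions_with_count k n t
          \<subseteq> bounded_overpartitions k (n - t * Suc k) \<times> UNIV"
    unfolding image_subset_iff by (intro ballI remove_largest_parts_mem)
qed

lemma bounded_overpartitions_Suc_decomp:
  "bounded_overpartitions (Suc k) n = (\<Union>t\<in>{0..n div Suc k}. overpartitions_with_count k n t)"
proof -
  have "count M (Suc k) \<le> n div Suc k" if "(M, S) \<in> bounded_overpartitions (Suc k) n" for M S
    using that count_mult_le_sum_mset[of M "Suc k"]
    by (auto simp: bounded_overpartitions_def less_eq_div_iff_mult_less_eq)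
  then show ?thesis by auto
qed


lemma card_overpartitions_with_count:
  assumes "1 \<le> t" "t * Suc k \<le> n" "finite (bounded_overpartitions k (n - t * Suc k))"
  shows "finite (overpartitions_with_count k n t)"
    and "card (overpartitions_with_count k n t) = 2 * card (bounded_overpartitions k (n - t * Suc k))"
proof -
  note bij = bij_betw_add_largest_parts[OF assms(1,2)]
  show "finite (overpartitions_with_count k n t)"
    using bij_betw_finite[OF bij] assms(3) by simp
  show "card (overpartitions_with_count k n t) = 2 * card (bounded_overpartitions k (n - t * Suc k))"
    using bij_betw_same_card[OF bij] by (simp add: card_cartesian_product)
qed

lemma overpartition_factor_mult_nth:
  "(overpartition_factor (Suc k) * F) $ i
     = F $ i + (\<Sum>t\<in>{1..i div Suc k}. 2 * F $ (i - t * Suc k) :: 'a::comm_ring_1)"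
proof -
  define g where "g j = overpartition_factor (Suc k) $ j * F $ (i - j)" for j
  have "(overpartition_factor (Suc k) * F) $ i = g 0 + (\<Sum>j\<in>{1..i}. g j)"
    unfolding g_def fps_mult_nth by (simp add: sum.atLeast_Suc_atMost)
  also have "(\<Sum>j\<in>{1..i}. g j) = (\<Sum>j\<in>(\<lambda>t. t * Suc k) ` {1..i div Suc k}. g j)"
  proof (rule sum.mono_neutral_cong_right)
    show "(\<lambda>t. t * Suc k) ` {1..i div Suc k} \<subseteq> {1..i}"
      by (auto simp: less_eq_div_iff_mult_less_eq)
    show "\<forall>j\<in>{1..i} - (\<lambda>t. t * Suc k) ` {1..i div Suc k}. g j = 0"
    proof
      fix j assume j: "j \<in> {1..i} - (\<lambda>t. t * Suc k) ` {1..i div Suc k}"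
      have "\<not> Suc k dvd j"
      proof
        assume "Suc k dvd j"
        then obtain t where t: "j = t * Suc k" by (metis dvdE mult.commute)
        with j have "t \<in> {1..i div Suc k}"
          by (cases t) (auto simp: less_eq_div_iff_mult_less_eq simp del: mult_Suc_right)
        with j t show False by blast
      qed
      then show "g j = 0" using j by (simp add: g_def overpartition_factor_def)
    qed
  qed auto
  also have "\<dots> = (\<Sum>t\<in>{1..i div Suc k}. g (t * Suc k))"
    by (rule sum.reindex[unfolded comp_def]) (rule inj_onI, simp del: mult_Suc_right)
  also have "\<dots> = (\<Sum>t\<in>{1..i div Suc k}. 2 * F $ (i - t * Suc k))"
  proof (intro sum.cong refl)
    fix t assume "t \<in> {1..i div Suc k}"
    then have "t * Suc k \<noteq> 0" by simp
    moreover have "Suc k dvd t * Suc k" by (rule dvd_triv_right)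
    ultimately show "g (t * Suc k) = 2 * F $ (i - t * Suc k)"
      unfolding g_def overpartition_factor_def by (simp del: mult_Suc_right)
  qed
  finally show ?thesis by (simp add: g_def overpartition_factor_def)
qed

lemma card_bounded_overpartitions_Suc:
  assumes fin: "\<And>m. finite (bounded_overpartitions k m)"
  shows "finite (bounded_overpartitions (Suc k) n)"
    and "card (bounded_overpartitions (Suc k) n)
           = card (bounded_overpartitions k n)
             + (\<Sum>t\<in>{1..n div Suc k}. 2 * card (bounded_overpartitions k (n - t * Suc k)))"
proof -
  define d where "d = n div Suc k"
  have t_le: "t * Suc k \<le> n" if "t \<in> {1..d}" for t
    using that by (simp add: d_def less_eq_div_iff_mult_less_eq)
  have fin_t: "finite (overpartitions_with_count k n t)"
    and card_t: "card (overpartitions_with_count k n t)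
                   = 2 * card (bounded_overpartitions k (n - t * Suc k))" if "t \<in> {1..d}" for t
    using card_overpartitions_with_count[OF _ t_le[OF that] fin] that by simp_all
  have fin_all: "\<forall>t\<in>{0..d}. finite (overpartitions_with_count k n t)"
  proof
    fix t assume "t \<in> {0..d}"
    then consider "t = 0" | "t \<in> {1..d}" by fastforce
    then show "finite (overpartitions_with_count k n t)"
      using fin fin_t by cases (auto simp: overpartitions_with_count_0)
  qed
  have disjoint: "overpartitions_with_count k n t \<inter> overpartitions_with_count k n s = {}"
    if "t \<noteq> s" for t s
    using that by auto
  note decomp = bounded_overpartitions_Suc_decomp[of k n, folded d_def]
  \<comment> \<open>\<open>subst\<close> rather than \<open>unfolding\<close>: the right-hand side of \<open>decomp\<close>
     contains its left-hand side.\<close>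
  show "finite (bounded_overpartitions (Suc k) n)"
    using fin_all by (subst decomp) blast
  have "card (bounded_overpartitions (Suc k) n) = (\<Sum>t\<in>{0..d}. card (overpartitions_with_count k n t))"
    by (subst decomp, rule card_UN_disjoint[OF finite_atLeastAtMost fin_all])
       (intro ballI impI disjoint)
  also have "\<dots> = card (overpartitions_with_count k n 0)
                    + (\<Sum>t\<in>{1..d}. card (overpartitions_with_count k n t))"
    by (simp add: sum.atLeast_Suc_atMost)
  also have "\<dots> = card (bounded_overpartitions k n)
                    + (\<Sum>t\<in>{1..d}. 2 * card (bounded_overpartitions k (n - t * Suc k)))"
    by (simp only: overpartitions_with_count_0 sum.cong[OF refl card_t])
  finally show "card (bounded_overpartitions (Suc k) n)
                  = card (bounded_overpartitions k n)
                    + (\<Sum>t\<in>{1..n div Suc k}. 2 * card (bounded_overpartitions k (n - t * Suc k)))"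
    unfolding d_def .
qed

lemma finite_bounded_overpartitions: "finite (bounded_overpartitions k n)"
  by (induction k arbitrary: n)
     (simp_all add: bounded_overpartitions_0 card_bounded_overpartitions_Suc(1))

lemma overpartition_gf_nth:
  "overpartition_gf k $ n = (of_nat (card (bounded_overpartitions k n)) :: 'a::comm_ring_1)"
proof (induction k arbitrary: n)
  case 0 then show ?case by (simp add: bounded_overpartitions_0 overpartition_gf_def)
next
  case (Suc k)
  have "overpartition_gf (Suc k) $ n
          = overpartition_gf k $ n + (\<Sum>t\<in>{1..n div Suc k}. 2 * overpartition_gf k $ (n - t * Suc k) :: 'a)"
    unfolding overpartition_gf_Suc by (rule overpartition_factor_mult_nth)
  then show ?case
    by (simp add: Suc.IH card_bounded_overpartitions_Suc(2)[OF finite_bounded_overpartitions])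
qed

lemma overpartition_gf_nth_eq_count:
  "n \<le> k \<Longrightarrow> overpartition_gf k $ n = (of_nat (overpartition_count n) :: 'a::comm_ring_1)"
  by (simp add: overpartition_gf_nth bounded_overpartitions_eq overpartition_count_def)

lemma overpartition_count_0: "overpartition_count 0 = 1"
  using bounded_overpartitions_eq[of 0 0, symmetric]
  by (simp add: overpartition_count_def bounded_overpartitions_0)

lemma overpartition_count_recurrence:
  assumes "1 \<le> n"
  shows "int (overpartition_count n)
           = (\<Sum>m | m \<in> {1..n} \<and> m^2 \<le> n. -2 * (-1) ^ m * int (overpartition_count (n - m^2)))"
proof -
  let ?F = "overpartition_gf (2*n) :: rat fps"
  let ?S = "\<Sum>m | m \<in> {1..n} \<and> m^2 \<le> n. (-1) ^ m * of_nat (overpartition_count (n - m^2)) :: rat"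
  have "(\<Sum>m\<in>{1..n}. (-1) ^ m * (if n < m^2 then 0 else ?F $ (n - m^2)))
          = (\<Sum>m\<in>{1..n}. if m^2 \<le> n then (-1) ^ m * of_nat (overpartition_count (n - m^2)) else 0)"
    by (intro sum.cong refl) (simp add: overpartition_gf_nth_eq_count not_less)
  also have "\<dots> = ?S"
    by (rule sum.inter_filter[symmetric]) simp
  finally have "?F $ n + 2 * ?S = 0"
    using overpartition_gf_nth_recurrence[where 'a = rat, of n n] assms by simp
  moreover have "?F $ n = of_nat (overpartition_count n)"
    by (rule overpartition_gf_nth_eq_count) simp
  ultimately have "(of_nat (overpartition_count n) :: rat) = - (2 * ?S)"
    by (simp add: eq_neg_iff_add_eq_0)
  also have "\<dots> = of_int (\<Sum>m | m \<in> {1..n} \<and> m^2 \<le> n. -2 * (-1) ^ m * int (overpartition_count (n - m^2)))"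
    by (simp add: sum_distrib_left mult.assoc sum_negf)
  finally have "(of_int (int (overpartition_count n)) :: rat)
      = of_int (\<Sum>m | m \<in> {1..n} \<and> m^2 \<le> n. -2 * (-1) ^ m * int (overpartition_count (n - m^2)))"
    by simp
  then show ?thesis by (simp only: of_int_eq_iff)
qed

section \<open>Compositions into squares\<close>

lemma length_le_sum_list: "\<forall>x\<in>set c. 0 < x \<Longrightarrow> length c \<le> sum_list (c :: nat list)"
  by (induction c) auto

lemma finite_compositions_in: "finite (compositions_in T n)"
proof (rule finite_subset)
  show "compositions_in T n \<subseteq> {c. set c \<subseteq> {0..n} \<and> length c \<le> n}"
    unfolding compositions_in_def using length_le_sum_list member_le_sum_list by fastforce
  show "finite {c. set c \<subseteq> {0..n} \<and> length c \<le> n}"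
    by (rule finite_lists_length_le) simp
qed

lemma compositions_in_0: "compositions_in T 0 = {[]}"
proof -
  have "c = []" if "\<forall>x\<in>set c. 0 < x" "sum_list c = (0 :: nat)" for c
    using that by (cases c) auto
  then show ?thesis unfolding compositions_in_def by auto
qed

lemma compositions_in_Cons_decomp:
  assumes "1 \<le> n"
  shows "compositions_in T n = (\<Union>s\<in>{s\<in>T. 0 < s \<and> s \<le> n}. (#) s ` compositions_in T (n - s))"
proof
  show "compositions_in T n \<subseteq> (\<Union>s\<in>{s\<in>T. 0 < s \<and> s \<le> n}. (#) s ` compositions_in T (n - s))"
  proof
    fix c assume c: "c \<in> compositions_in T n"
    with assms obtain s c' where "c = s # c'"
      unfolding compositions_in_def by (cases c) auto
    with c show "c \<in> (\<Union>s\<in>{s\<in>T. 0 < s \<and> s \<le> n}. (#) s ` compositions_in T (n - s))"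
      unfolding compositions_in_def by auto
  qed
qed (auto simp: compositions_in_def)

lemma sum_compositions_in_recurrence:
  fixes x :: "'a::comm_semiring_1"
  assumes "1 \<le> n"
  shows "(\<Sum>c\<in>compositions_in T n. x ^ length c)
           = (\<Sum>s\<in>{s\<in>T. 0 < s \<and> s \<le> n}. x * (\<Sum>c\<in>compositions_in T (n - s). x ^ length c))"
proof -
  let ?S = "{s\<in>T. 0 < s \<and> s \<le> n}"
  have "(\<Sum>c\<in>compositions_in T n. x ^ length c)
          = (\<Sum>s\<in>?S. \<Sum>c\<in>(#) s ` compositions_in T (n - s). x ^ length c)"
    unfolding compositions_in_Cons_decomp[OF assms]
    by (rule sum.UNION_disjoint) (auto simp: finite_compositions_in)
  also have "\<dots> = (\<Sum>s\<in>?S. x * (\<Sum>c\<in>compositions_in T (n - s). x ^ length c))"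
    by (simp add: sum.reindex sum_distrib_left)
  finally show ?thesis .
qed

definition square_composition_sum :: "nat \<Rightarrow> int" where
  "square_composition_sum n = (\<Sum>c\<in>compositions_in P4 n. (-2) ^ length c)"

lemma square_composition_sum_recurrence:
  assumes "1 \<le> n"
  shows "square_composition_sum n
           = (\<Sum>m | m \<in> {1..n} \<and> m^2 \<le> n. -2 * square_composition_sum (n - m^2))"
proof -
  have squares: "{s\<in>P4. 0 < s \<and> s \<le> n} = (\<lambda>m. m^2) ` {m. m \<in> {1..n} \<and> m^2 \<le> n}"
  proof -
    have "m \<le> m^2" for m :: nat by (simp add: power2_eq_square)
    then show ?thesis unfolding P4_def by (force intro: order.trans)
  qed
  have "inj_on (\<lambda>m. m^2) {m :: nat. m \<in> {1..n} \<and> m^2 \<le> n}"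
    by (rule inj_onI) (simp add: power2_eq_iff_nonneg)
  then show ?thesis
    unfolding square_composition_sum_def sum_compositions_in_recurrence[OF assms] squares
    by (simp add: sum.reindex)
qed

lemma minus_one_power_square: "(-1 :: 'a::ring_1) ^ (m^2) = (-1) ^ m"
  by (cases "even m") (auto simp: power2_eq_square)

lemma signed_square_composition_sum_recurrence:
  assumes "1 \<le> n"
  shows "(-1) ^ n * square_composition_sum n
           = (\<Sum>m | m \<in> {1..n} \<and> m^2 \<le> n.
                -2 * (-1) ^ m * ((-1) ^ (n - m^2) * square_composition_sum (n - m^2)))"
  unfolding square_composition_sum_recurrence[OF assms] sum_distrib_left
proof (intro sum.cong refl)
  fix m assume "m \<in> {m. m \<in> {1..n} \<and> m^2 \<le> n}"
  then have "(-1 :: int) ^ n = (-1) ^ (m^2) * (-1) ^ (n - m^2)"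
    by (simp flip: power_add)
  then show "(-1) ^ n * (-2 * square_composition_sum (n - m^2))
               = -2 * (-1) ^ m * ((-1) ^ (n - m^2) * square_composition_sum (n - m^2))"
    by (simp add: minus_one_power_square)
qed

theorem theorem3:
  fixes n :: nat
  shows "int (overpartition_count n)
           = (-1) ^ n * (\<Sum>c\<in>compositions_in P4 n. (-2) ^ length c)"
  unfolding square_composition_sum_def[symmetric]
proof (induction n rule: less_induct)
  case (less n)
  show ?case
  proof (cases "n = 0")
    case True
    then show ?thesis
      by (simp add: overpartition_count_0 square_composition_sum_def compositions_in_0)
  next
    case False
    then have "1 \<le> n" by simp
    then show ?thesis
      unfolding overpartition_count_recurrence[OF \<open>1 \<le> n\<close>]
        signed_square_composition_sum_recurrence[OF \<open>1 \<le> n\<close>]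
      by (intro sum.cong refl) (simp add: less.IH)
  qed
qed

end
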